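(* For every $h\in C_\mathbb{R}(\mathcal{X}^n)$ and $\mu_1,\dots,\mu_n\in\mathrm{Prob}(\mathcal{X})$, $$P_\mathrm{sym}(h:\mu_1,\dots,\mu_n)=\max\{\mu(h)-\mathcal{I}_\mathrm{sym}(\mu):\mu\in\mathrm{Prob}_{\mu_1,\dots,\mu_n}(\mathcal{X}^n)\},$$ with the maximum attained; moreover $|P_\mathrm{sym}(h:\mu_1,\dots,\mu_n)-P_\mathrm{sym}(h':\mu_1,\dots,\mu_n)|\le\|h-h'\|$ for all $h,h'\in C_\mathbb{R}(\mathcal{X}^n)$.
   Context: $\mathcal{X}=\{t_1,\dots,t_d\}$ is a finite set with a fixed order $t_1<\dots<t_d$; $n\in\mathbb{N}$. $\mathrm{Prob}(\mathcal{X}^k)$ is the set of probability measures on $\mathcal{X}^k$, $C_\mathbb{R}(\mathcal{X}^n)$ the real functions on $\mathcal{X}^n$ with norm $\|f\|=\max|f|$; $\mu(h)=\sum_\mathbf{x}h(\mathbf{x})\mu(\mathbf{x})$. $\mathrm{Prob}_{\mu_1,\dots,\mu_n}(\mathcal{X}^n)$ is the set of $\mu\in\mathrm{Prob}(\mathcal{X}^n)$ whose $i$th marginal is $\mu_i$ for each $i$. For $\mathbf{x}\in\mathcal{X}^N$ its type is $\nu_\mathbf{x}(t)=\#\{j:x_j=t\}/N$. $\mathcal{X}_\le^N$ is the set of sequences in $\mathcal{X}^N$ of the form $(t_1,\dots,t_1,\dots,t_d,\dots,t_d)$. $S_N$ acts by $\sigma(\mathbf{x})=(x_{\sigma^{-1}(1)},\dots,x_{\sigma^{-1}(N)})$.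 An approximating sequence for $(\mu_1,\dots,\mu_n)$ is $\Xi(N)=(\xi_1(N),\dots,\xi_n(N))$ with $\xi_i(N)\in\mathcal{X}_\le^N$ and $\nu_{\xi_i(N)}(t)\to\mu_i(t)$ for all $t$. For $h\in C_\mathbb{R}(\mathcal{X}^n)$, $\kappa_N(h(\mathbf{x}_1,\dots,\mathbf{x}_n))=\frac1N\sum_{j=1}^Nh(x_{1j},\dots,x_{nj})$. The mutual pressure is $$P_\mathrm{sym}(h:\mu_1,\dots,\mu_n)=\limsup_{N\to\infty}\frac1N\log\Biggl[\frac1{(N!)^n}\sum_{\sigma_1,\dots,\sigma_n\in S_N}\exp\bigl(N\kappa_N(h(\sigma_1(\xi_1(N)),\dots,\sigma_n(\xi_n(N))))\bigr)\Biggr]$$ (independent of the approximating sequence), and for $\mu$ with marginals $\mu_1,\dots,\mu_n$, $\mathcal{I}_\mathrm{sym}(\mu)=\sup\{\mu(h)-P_\mathrm{sym}(h:\mu_1,\dots,\mu_n):h\in C_\mathbb{R}(\mathcal{X}^n)\}$. *)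

theory Defs
  imports "HOL-Analysis.Analysis" "HOL-Combinatorics.Permutations"
begin

text \<open>The finite ordered alphabet X is a type 'a :: {finite, linorder}. Functions on X^k and probability
  measures on X^k are real-valued functions on lists (only values on lists of
  length k matter).\<close>

definition pts :: "nat \<Rightarrow> 'a list set" where
  "pts k = {xs. length xs = k}"

definition is_prob :: "('a::finite \<Rightarrow> real) \<Rightarrow> bool" where
  "is_prob p \<longleftrightarrow> (\<forall>t. 0 \<le> p t) \<and> (\<Sum>t\<in>UNIV. p t) = 1"

definition is_prob_n :: "nat \<Rightarrow> ('a::finite list \<Rightarrow> real) \<Rightarrow> bool" where
  "is_prob_n n \<mu> \<longleftrightarrow> (\<forall>x\<in>pts n. 0 \<le> \<mu> x) \<and> (\<Sum>x\<in>pts n. \<mu> x) = 1"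

definition integ :: "nat \<Rightarrow> ('a list \<Rightarrow> real) \<Rightarrow> ('a list \<Rightarrow> real) \<Rightarrow> real" where
  "integ n \<mu> h = (\<Sum>x\<in>pts n. h x * \<mu> x)"

text \<open>i-th marginal (i < n, 0-based)\<close>
definition marginal :: "nat \<Rightarrow> ('a list \<Rightarrow> real) \<Rightarrow> nat \<Rightarrow> 'a \<Rightarrow> real" where
  "marginal n \<mu> i t = (\<Sum>x\<in>{x\<in>pts n. x ! i = t}. \<mu> x)"

definition marginals :: "nat \<Rightarrow> ('a list \<Rightarrow> real) \<Rightarrow> ('a \<Rightarrow> real) list" where
  "marginals n \<mu> = map (marginal n \<mu>) [0..<n]"

definition prob_marg :: "('a::finite \<Rightarrow> real) list \<Rightarrow> ('a list \<Rightarrow> real) set" where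
  "prob_marg ms = {\<mu>. is_prob_n (length ms) \<mu> \<and> marginals (length ms) \<mu> = ms}"

definition seq_type :: "'a list \<Rightarrow> 'a \<Rightarrow> real" where
  "seq_type x t = real (count_list x t) / real (length x)"

definition approx_seq :: "('a::linorder \<Rightarrow> real) list \<Rightarrow> (nat \<Rightarrow> 'a list list) \<Rightarrow> bool" where
  "approx_seq ms \<Xi> \<longleftrightarrow>
     (\<forall>N. length (\<Xi> N) = length ms \<and>
          (\<forall>i<length ms. length (\<Xi> N ! i) = N \<and> sorted (\<Xi> N ! i))) \<and>
     (\<forall>i<length ms. \<forall>t. (\<lambda>N. seq_type (\<Xi> N ! i) t) \<longlonglongrightarrow> (ms ! i) t)"

definition act :: "(nat \<Rightarrow> nat) \<Rightarrow> 'a list \<Rightarrow> 'a list" where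
  "act \<sigma> x = permute_list (inv \<sigma>) x"

text \<open>N * kappa_N(h(x_1,...,x_n)) = sum_j h(x_{1j},...,x_{nj})\<close>
definition N_kappa :: "nat \<Rightarrow> ('a list \<Rightarrow> real) \<Rightarrow> 'a list list \<Rightarrow> real" where
  "N_kappa N h xs = (\<Sum>j<N. h (map (\<lambda>x. x ! j) xs))"

definition perm_tuples :: "nat \<Rightarrow> nat \<Rightarrow> (nat \<Rightarrow> nat) list set" where
  "perm_tuples n N = {ss. length ss = n \<and> (\<forall>\<sigma>\<in>set ss. \<sigma> permutes {..<N})}"

definition pressure_seq :: "('a list \<Rightarrow> real) \<Rightarrow> nat \<Rightarrow> (nat \<Rightarrow> 'a list list) \<Rightarrow> nat \<Rightarrow> real" where
  "pressure_seq h n \<Xi> N =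
     (1 / real N) * ln ((1 / (fact N) ^ n) *
        (\<Sum>ss\<in>perm_tuples n N. exp (N_kappa N h (map2 act ss (\<Xi> N)))))"

text \<open>Mutual pressure, computed along some approximating sequence (the paper
  notes it is independent of the choice).\<close>
definition P_sym :: "('a::{finite,linorder} list \<Rightarrow> real) \<Rightarrow> ('a \<Rightarrow> real) list \<Rightarrow> ereal" where
  "P_sym h ms = limsup (\<lambda>N. ereal (pressure_seq h (length ms) (SOME \<Xi>. approx_seq ms \<Xi>) N))"

definition I_sym :: "nat \<Rightarrow> ('a::{finite,linorder} list \<Rightarrow> real) \<Rightarrow> ereal" where
  "I_sym n \<mu> = (SUP h. ereal (integ n \<mu> h) - P_sym h (marginals n \<mu>))"

definition supnorm :: "nat \<Rightarrow> ('a::finite list \<Rightarrow> real) \<Rightarrow> real" where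
  "supnorm n f = Max ((\<lambda>x. \<bar>f x\<bar>) ` pts n)"

end

theory Submission
  imports Defs
begin

text \<open>
  Write P(h) for the mutual pressure of h and P_N(h) for its finite-volume approximations,
  computed along an approximating sequence (one exists: round N times each marginal).
  Each P_N is a normalised log-sum-exp of the linear functionals h \<mapsto> N kappa_N(h), hence
  convex, monotone and 1-Lipschitz for the sup norm; moreover, since permuting a row does not
  change its letter counts, adding a constant c (resp. a function s [x_i = t] of one coordinate)
  shifts P_N by c (resp. by s times the type of the i-th row at t). All of this survives the
  limsup, so P is a finite convex functional on the finite-dimensional space C(X^n).
  A finite-dimensional Hahn--Banach argument, applied to the one-sided directional derivative,
  yields a subgradient mu of P at h. The two shift identities force mu to be a probability
  measure with marginals mu_1, ..., mu_n, and the subgradient inequality says that the supremum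
  defining I_sym(mu) is attained at h, i.e. I_sym(mu) = mu(h) - P(h). Together with the
  Fenchel--Young inequality this is the variational principle with the maximum attained.
\<close>

definition sublinear :: "(('b \<Rightarrow> real) \<Rightarrow> real) \<Rightarrow> bool" where
  "sublinear p \<longleftrightarrow>
     (\<forall>g g'. p (\<lambda>x. g x + g' x) \<le> p g + p g') \<and>
     (\<forall>s g. 0 < s \<longrightarrow> p (\<lambda>x. s * g x) = s * p g)"

text \<open>The functions supported in S form the finite-dimensional space on which
  linear functionals are finite sums.\<close>

definition vanishes_outside :: "'b set \<Rightarrow> ('b \<Rightarrow> real) \<Rightarrow> bool" where
  "vanishes_outside S w \<longleftrightarrow> (\<forall>x. x \<notin> S \<longrightarrow> w x = 0)"

text \<open>Positive homogeneity forces p 0 = 0.\<close>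

lemma sublinear_zero:
  assumes "sublinear p"
  shows "p (\<lambda>x. 0) = 0"
proof -
  have "\<forall>s g. 0 < s \<longrightarrow> p (\<lambda>x. s * g x) = s * p g"
    using assms by (simp add: sublinear_def)
  from this[rule_format, of 2 "\<lambda>x. 0"] show ?thesis by simp
qed

text \<open>Core of the one-step Hahn--Banach extension: for a linear functional dominated by p
  on the functions supported in S, the lower and upper bounds for its value at a new
  direction e are separated by subadditivity, so some d lies in between.\<close>

lemma hahn_banach_gap:
  fixes p :: "('b \<Rightarrow> real) \<Rightarrow> real" and c e :: "'b \<Rightarrow> real"
  assumes p: "sublinear p"
    and dom: "\<And>w. vanishes_outside S w \<Longrightarrow> (\<Sum>x\<in>S. c x * w x) \<le> p w"
  shows "\<exists>d. \<forall>w. vanishes_outside S w \<longrightarrow>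
           (\<Sum>x\<in>S. c x * w x) - p (\<lambda>x. w x - e x) \<le> d \<and>
           d \<le> p (\<lambda>x. w x + e x) - (\<Sum>x\<in>S. c x * w x)"
proof -
  define W where "W = Collect (vanishes_outside S)"
  define L where "L w = (\<Sum>x\<in>S. c x * w x)" for w :: "'b \<Rightarrow> real"
  have sub: "p (\<lambda>x. g x + g' x) \<le> p g + p g'" for g g'
    using p by (simp add: sublinear_def)
  have sep: "L w - p (\<lambda>x. w x - e x) \<le> p (\<lambda>x. w' x + e x) - L w'"
    if "w \<in> W" "w' \<in> W" for w w'
  proof -
    have "L w + L w' = L (\<lambda>x. w x + w' x)"
      by (simp add: L_def sum.distrib distrib_left)
    also have "\<dots> \<le> p (\<lambda>x. w x + w' x)"
      using dom that unfolding L_def W_def vanishes_outside_def by auto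
    also have "\<dots> \<le> p (\<lambda>x. w x - e x) + p (\<lambda>x. w' x + e x)"
      using sub[of "\<lambda>x. w x - e x" "\<lambda>x. w' x + e x"] by simp
    finally show ?thesis by simp
  qed
  define d where "d = (SUP w\<in>W. L w - p (\<lambda>x. w x - e x))"
  have zero_W: "(\<lambda>x. 0) \<in> W" by (simp add: W_def vanishes_outside_def)
  have "bdd_above ((\<lambda>w. L w - p (\<lambda>x. w x - e x)) ` W)"
    using sep[OF _ zero_W] by (auto intro!: bdd_aboveI)
  then have "L w - p (\<lambda>x. w x - e x) \<le> d \<and> d \<le> p (\<lambda>x. w x + e x) - L w"
    if "w \<in> W" for w
    unfolding d_def using that zero_W sep by (auto intro!: cSUP_upper cSUP_least)
  then show ?thesis unfolding W_def L_def by (intro exI[of _ d]) simp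
qed

text \<open>One-step extension: the value d at the direction e extends the dominated linear functional
  to the span of S and e (by positive homogeneity, treating t > 0 and t < 0 separately).\<close>

lemma hahn_banach_step:
  fixes p :: "('b \<Rightarrow> real) \<Rightarrow> real" and c e :: "'b \<Rightarrow> real"
  assumes p: "sublinear p"
    and dom: "\<And>w. vanishes_outside S w \<Longrightarrow> (\<Sum>x\<in>S. c x * w x) \<le> p w"
  shows "\<exists>d. \<forall>w t. vanishes_outside S w \<longrightarrow>
           (\<Sum>x\<in>S. c x * w x) + d * t \<le> p (\<lambda>x. w x + t * e x)"
proof -
  define L where "L w = (\<Sum>x\<in>S. c x * w x)" for w :: "'b \<Rightarrow> real"
  obtain d where d: "\<And>w. vanishes_outside S w \<Longrightarrow>
      L w - p (\<lambda>x. w x - e x) \<le> d \<and> d \<le> p (\<lambda>x. w x + e x) - L w"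
    using hahn_banach_gap[OF p dom, of e] unfolding L_def by blast
  have hom: "p (\<lambda>x. s * g x) = s * p g" if "0 < s" for s g
    using p that by (simp add: sublinear_def)
  have L_scale: "L (\<lambda>x. s * w x) = s * L w" for s w
    by (simp add: L_def sum_distrib_left mult_ac)
  have "L w + d * t \<le> p (\<lambda>x. w x + t * e x)" if w: "vanishes_outside S w" for w t
  proof (cases t "0::real" rule: linorder_cases)
    case equal
    then show ?thesis using dom w by (simp add: L_def)
  next
    case greater
    have "vanishes_outside S (\<lambda>x. w x / t)" using w by (simp add: vanishes_outside_def)
    then have "t * d \<le> t * (p (\<lambda>x. w x / t + e x) - L (\<lambda>x. w x / t))"
      using d greater by (simp add: mult_left_mono)
    also have "\<dots> = p (\<lambda>x. t * (w x / t + e x)) - L w"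
      using greater hom[of t "\<lambda>x. w x / t + e x"] L_scale[of t "\<lambda>x. w x / t"]
      by (simp add: right_diff_distrib)
    also have "(\<lambda>x. t * (w x / t + e x)) = (\<lambda>x. w x + t * e x)"
      using greater by (auto simp: field_simps)
    finally show ?thesis by (simp add: mult_ac)
  next
    case less
    define s where "s = - t"
    have s: "0 < s" using less by (simp add: s_def)
    have "vanishes_outside S (\<lambda>x. w x / s)" using w by (simp add: vanishes_outside_def)
    then have "s * (L (\<lambda>x. w x / s) - p (\<lambda>x. w x / s - e x)) \<le> s * d"
      using d s by (simp add: mult_left_mono)
    also have "s * (L (\<lambda>x. w x / s) - p (\<lambda>x. w x / s - e x)) = L w - p (\<lambda>x. s * (w x / s - e x))"
      using s hom[of s "\<lambda>x. w x / s - e x"] L_scale[of s "\<lambda>x. w x / s"]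
      by (simp add: right_diff_distrib)
    also have "(\<lambda>x. s * (w x / s - e x)) = (\<lambda>x. w x + t * e x)"
      using s by (auto simp: field_simps s_def)
    finally show ?thesis by (simp add: s_def mult_ac)
  qed
  then show ?thesis unfolding L_def by blast
qed

lemma hahn_banach_finite:
  fixes p :: "('b \<Rightarrow> real) \<Rightarrow> real"
  assumes p: "sublinear p" and "finite S"
  shows "\<exists>c. \<forall>g. vanishes_outside S g \<longrightarrow> (\<Sum>x\<in>S. c x * g x) \<le> p g"
  using \<open>finite S\<close>
proof (induction S rule: finite_induct)
  case empty
  have "0 \<le> p g" if "vanishes_outside {} g" for g
  proof -
    have "g = (\<lambda>x. 0)" using that by (auto simp: vanishes_outside_def)
    then show ?thesis using sublinear_zero[OF p] by simp
  qed
  then show ?case by simp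
next
  case (insert a S)
  let ?e = "\<lambda>x. if x = a then 1 else 0 :: real"
  from insert.IH obtain c where "\<And>g. vanishes_outside S g \<Longrightarrow> (\<Sum>x\<in>S. c x * g x) \<le> p g"
    by blast
  then obtain d where d: "\<And>w t. vanishes_outside S w \<Longrightarrow>
      (\<Sum>x\<in>S. c x * w x) + d * t \<le> p (\<lambda>x. w x + t * ?e x)"
    using hahn_banach_step[OF p, of S c ?e] by blast
  have "(\<Sum>x\<in>insert a S. (c(a := d)) x * g x) \<le> p g"
    if g: "vanishes_outside (insert a S) g" for g
  proof -
    have split: "(\<lambda>x. (g(a := 0)) x + g a * ?e x) = g" by auto
    have "vanishes_outside S (g(a := 0))" using g by (simp add: vanishes_outside_def)
    moreover have "(\<Sum>x\<in>insert a S. (c(a := d)) x * g x) = (\<Sum>x\<in>S. c x * (g(a := 0)) x) + d * g a"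
      using insert.hyps by (auto simp: add.commute intro!: sum.cong)
    ultimately show ?thesis using d[of "g(a := 0)" "g a"] split by simp
  qed
  then show ?case by blast
qed

definition convex_functional :: "(('b \<Rightarrow> real) \<Rightarrow> real) \<Rightarrow> bool" where
  "convex_functional F \<longleftrightarrow>
     (\<forall>g g' a. 0 \<le> a \<longrightarrow> a \<le> 1 \<longrightarrow>
        F (\<lambda>x. a * g x + (1 - a) * g' x) \<le> a * F g + (1 - a) * F g')"

lemma convex_functionalD:
  assumes "convex_functional F" "0 \<le> a" "a \<le> 1"
  shows "F (\<lambda>x. a * g x + (1 - a) * g' x) \<le> a * F g + (1 - a) * F g'"
  using assms unfolding convex_functional_def by blast

definition is_subgradient ::
    "'b set \<Rightarrow> (('b \<Rightarrow> real) \<Rightarrow> real) \<Rightarrow> ('b \<Rightarrow> real) \<Rightarrow> ('b \<Rightarrow> real) \<Rightarrow> bool" where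
  "is_subgradient S F h c \<longleftrightarrow> (\<forall>g. F h + (\<Sum>x\<in>S. c x * (g x - h x)) \<le> F g)"

definition diff_quot :: "(('b \<Rightarrow> real) \<Rightarrow> real) \<Rightarrow> ('b \<Rightarrow> real) \<Rightarrow> ('b \<Rightarrow> real) \<Rightarrow> real \<Rightarrow> real" where
  "diff_quot F h g t = (F (\<lambda>x. h x + t * g x) - F h) / t"

definition dir_deriv :: "(('b \<Rightarrow> real) \<Rightarrow> real) \<Rightarrow> ('b \<Rightarrow> real) \<Rightarrow> ('b \<Rightarrow> real) \<Rightarrow> real" where
  "dir_deriv F h g = (INF t\<in>{0<..}. diff_quot F h g t)"

lemma diff_quot_mono:
  assumes F: "convex_functional F" and st: "0 < s" "s \<le> t"
  shows "diff_quot F h g s \<le> diff_quot F h g t"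
proof -
  have "F (\<lambda>x. h x + s * g x) = F (\<lambda>x. (s/t) * (h x + t * g x) + (1 - s/t) * h x)"
    using st by (intro arg_cong[where f=F]) (auto simp: field_simps)
  also have "\<dots> \<le> (s/t) * F (\<lambda>x. h x + t * g x) + (1 - s/t) * F h"
    using convex_functionalD[OF F, of "s/t"] st by simp
  finally have "F (\<lambda>x. h x + s * g x) - F h \<le> (s/t) * (F (\<lambda>x. h x + t * g x) - F h)"
    by (simp add: algebra_simps)
  then show ?thesis using st unfolding diff_quot_def by (simp add: pos_divide_le_eq mult.commute)
qed

lemma diff_quot_midpoint:
  assumes F: "convex_functional F" and t: "0 < t"
  shows "diff_quot F h (\<lambda>x. g x + g' x) t \<le> diff_quot F h g (2*t) + diff_quot F h g' (2*t)"
proof -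
  have "F (\<lambda>x. h x + t * (g x + g' x))
      = F (\<lambda>x. (1/2) * (h x + (2*t) * g x) + (1 - 1/2) * (h x + (2*t) * g' x))"
    by (intro arg_cong[where f=F]) (auto simp: field_simps)
  also have "\<dots> \<le> (1/2) * F (\<lambda>x. h x + (2*t) * g x) + (1 - 1/2) * F (\<lambda>x. h x + (2*t) * g' x)"
    using convex_functionalD[OF F, of "1/2"] by simp
  finally have "F (\<lambda>x. h x + t * (g x + g' x)) - F h \<le>
     (F (\<lambda>x. h x + (2*t) * g x) - F h) / 2 + (F (\<lambda>x. h x + (2*t) * g' x) - F h) / 2"
    by (simp add: diff_divide_distrib)
  then have "(F (\<lambda>x. h x + t * (g x + g' x)) - F h) / t \<le>
     ((F (\<lambda>x. h x + (2*t) * g x) - F h) / 2 + (F (\<lambda>x. h x + (2*t) * g' x) - F h) / 2) / t"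
    using t by (intro divide_right_mono) auto
  also have "\<dots> = diff_quot F h g (2*t) + diff_quot F h g' (2*t)"
    unfolding diff_quot_def using t by (simp add: field_simps)
  finally show ?thesis unfolding diff_quot_def .
qed

lemma dir_deriv_ge: "(\<And>t. 0 < t \<Longrightarrow> y \<le> diff_quot F h g t) \<Longrightarrow> y \<le> dir_deriv F h g"
  unfolding dir_deriv_def by (auto intro!: cINF_greatest)

context
  fixes F :: "('b \<Rightarrow> real) \<Rightarrow> real" and h :: "'b \<Rightarrow> real"
  assumes bounded: "\<And>g. \<exists>C. \<forall>t>0. F h - F (\<lambda>x. h x + t * g x) \<le> t * C"
begin

lemma dir_deriv_le: "0 < t \<Longrightarrow> dir_deriv F h g \<le> diff_quot F h g t"
proof -
  assume t: "0 < t"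
  obtain C where "\<forall>t>0. F h - F (\<lambda>x. h x + t * g x) \<le> t * C" using bounded by blast
  then have "- C \<le> diff_quot F h g u" if "0 < u" for u
    using that unfolding diff_quot_def by (auto simp: field_simps)
  then have "bdd_below (diff_quot F h g ` {0<..})" by (auto intro!: bdd_belowI)
  then show ?thesis unfolding dir_deriv_def using t by (auto intro!: cINF_lower)
qed

lemma dir_deriv_scale:
  assumes s: "0 < s"
  shows "dir_deriv F h (\<lambda>x. s * g x) = s * dir_deriv F h g"
proof -
  have scale: "diff_quot F h (\<lambda>x. s * g x) t = s * diff_quot F h g (s * t)" if "0 < t" for t
    using s that unfolding diff_quot_def by (simp add: field_simps mult.assoc)
  have "dir_deriv F h (\<lambda>x. s * g x) / s \<le> dir_deriv F h g"
  proof (rule dir_deriv_ge)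
    fix u :: real assume u: "0 < u"
    have "dir_deriv F h (\<lambda>x. s * g x) \<le> s * diff_quot F h g u"
      using dir_deriv_le[of "u / s" "\<lambda>x. s * g x"] scale[of "u / s"] u s by simp
    then show "dir_deriv F h (\<lambda>x. s * g x) / s \<le> diff_quot F h g u"
      using s by (simp add: field_simps)
  qed
  moreover have "s * dir_deriv F h g \<le> dir_deriv F h (\<lambda>x. s * g x)"
  proof (rule dir_deriv_ge)
    fix t :: real assume t: "0 < t"
    have "s * dir_deriv F h g \<le> s * diff_quot F h g (s * t)"
      using dir_deriv_le[of "s * t" g] s t by simp
    also have "\<dots> = diff_quot F h (\<lambda>x. s * g x) t" using scale t by simp
    finally show "s * dir_deriv F h g \<le> diff_quot F h (\<lambda>x. s * g x) t" .
  qed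
  ultimately show ?thesis using s by (simp add: field_simps)
qed

lemma dir_deriv_add:
  assumes F: "convex_functional F"
  shows "dir_deriv F h (\<lambda>x. g x + g' x) \<le> dir_deriv F h g + dir_deriv F h g'"
proof -
  have both: "dir_deriv F h (\<lambda>x. g x + g' x) \<le> diff_quot F h g t1 + diff_quot F h g' t2"
    if "0 < t1" "0 < t2" for t1 t2
  proof -
    define t where "t = min t1 t2 / 2"
    have t: "0 < t" "2*t \<le> t1" "2*t \<le> t2" using that by (auto simp: t_def)
    have "dir_deriv F h (\<lambda>x. g x + g' x) \<le> diff_quot F h (\<lambda>x. g x + g' x) t"
      using dir_deriv_le t by auto
    also have "\<dots> \<le> diff_quot F h g (2*t) + diff_quot F h g' (2*t)"
      using diff_quot_midpoint[OF F] t by auto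
    also have "\<dots> \<le> diff_quot F h g t1 + diff_quot F h g' t2"
      using diff_quot_mono[OF F] t by (intro add_mono) auto
    finally show ?thesis .
  qed
  have "dir_deriv F h (\<lambda>x. g x + g' x) - dir_deriv F h g \<le> dir_deriv F h g'"
  proof (rule dir_deriv_ge)
    fix t2 :: real assume t2: "0 < t2"
    have "dir_deriv F h (\<lambda>x. g x + g' x) - diff_quot F h g' t2 \<le> dir_deriv F h g"
      by (rule dir_deriv_ge) (use both t2 in force)
    then show "dir_deriv F h (\<lambda>x. g x + g' x) - dir_deriv F h g \<le> diff_quot F h g' t2"
      by simp
  qed
  then show ?thesis by simp
qed

text \<open>Existence of subgradients: the Hahn--Banach minorant of the directional derivative is a
  subgradient, provided F only depends on the coordinates in S.\<close>

lemma subgradient_exists: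
  assumes F: "convex_functional F" and "finite S"
    and local: "\<And>g g'. \<forall>x\<in>S. g x = g' x \<Longrightarrow> F g = F g'"
  shows "\<exists>c. is_subgradient S F h c"
proof -
  have "sublinear (dir_deriv F h)"
    unfolding sublinear_def using dir_deriv_add[OF F] dir_deriv_scale by simp
  then obtain c where c: "\<And>g. vanishes_outside S g \<Longrightarrow> (\<Sum>x\<in>S. c x * g x) \<le> dir_deriv F h g"
    using hahn_banach_finite[OF _ \<open>finite S\<close>] by metis
  have "F h + (\<Sum>x\<in>S. c x * (g x - h x)) \<le> F g" for g
  proof -
    define g0 where "g0 x = (if x \<in> S then g x - h x else 0)" for x
    have "(\<Sum>x\<in>S. c x * (g x - h x)) = (\<Sum>x\<in>S. c x * g0 x)"
      by (intro sum.cong) (auto simp: g0_def)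
    also have "\<dots> \<le> dir_deriv F h g0" using c[of g0] by (simp add: g0_def vanishes_outside_def)
    also have "\<dots> \<le> diff_quot F h g0 1" using dir_deriv_le by auto
    also have "\<dots> = F g - F h"
      using local[of "\<lambda>x. h x + 1 * g0 x" g] by (simp add: diff_quot_def g0_def)
    finally show ?thesis by simp
  qed
  then show ?thesis unfolding is_subgradient_def by blast
qed

end

lemma subgradient_nonneg:
  assumes sg: "is_subgradient S F h c" and S: "finite S" "x \<in> S"
    and mono: "\<And>g g'. (\<And>y. y \<in> S \<Longrightarrow> g y \<le> g' y) \<Longrightarrow> F g \<le> F g'"
  shows "0 \<le> c x"
proof -
  define g where "g y = h y - (if y = x then 1 else 0)" for y
  have "(\<Sum>y\<in>S. c y * (g y - h y)) = (\<Sum>y\<in>S. if y = x then - c x else 0)"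
    by (intro sum.cong) (auto simp: g_def)
  also have "\<dots> = - c x" using S by simp
  finally have "F h - c x \<le> F g"
    using sg[unfolded is_subgradient_def, rule_format, of g] by simp
  moreover have "F g \<le> F h" by (rule mono) (simp add: g_def)
  ultimately show ?thesis by simp
qed

text \<open>If F is affine along the direction e with slope a, every subgradient pairs with e
  to give exactly a (test the subgradient inequality with s = 1 and s = -1).\<close>

lemma subgradient_affine_direction:
  assumes sg: "is_subgradient S F h c"
    and shift: "\<And>s. F (\<lambda>x. h x + s * e x) = F h + s * a"
  shows "(\<Sum>x\<in>S. c x * e x) = a"
proof -
  have "s * (\<Sum>x\<in>S. c x * e x) \<le> s * a" for s
    using sg[unfolded is_subgradient_def, rule_format, of "\<lambda>x. h x + s * e x"] shift[of s]
    by (simp add: sum_distrib_left mult_ac)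
  from this[of 1] this[of "- 1"] show ?thesis by simp
qed

lemma subgradient_maximizes:
  assumes "is_subgradient S F h c"
  shows "(\<Sum>x\<in>S. c x * g x) - F g \<le> (\<Sum>x\<in>S. c x * h x) - F h"
  using assms[unfolded is_subgradient_def, rule_format, of g]
  by (simp add: sum_subtractf right_diff_distrib)

lemma finite_pts: "finite (pts n :: 'a::finite list set)"
  using finite_lists_length_eq[of "UNIV :: 'a set" n] by (simp add: pts_def)

lemma pts_nonempty: "pts n \<noteq> {}"
  using length_replicate[of n undefined] unfolding pts_def by blast

lemma abs_le_supnorm: "x \<in> pts n \<Longrightarrow> \<bar>f x\<bar> \<le> supnorm n (f :: 'a::finite list \<Rightarrow> real)"
  unfolding supnorm_def by (rule Max_ge) (auto simp: finite_pts)

lemma supnorm_nonneg: "0 \<le> supnorm n (f :: 'a::finite list \<Rightarrow> real)"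
proof -
  obtain x where "x \<in> (pts n :: 'a list set)" using pts_nonempty by blast
  then show ?thesis using abs_le_supnorm[of x n f] by linarith
qed

lemma supnorm_le:
  "(\<And>x. x \<in> pts n \<Longrightarrow> \<bar>f x\<bar> \<le> B) \<Longrightarrow> supnorm n (f :: 'a::finite list \<Rightarrow> real) \<le> B"
  unfolding supnorm_def by (rule Max.boundedI) (auto simp: finite_pts pts_nonempty)

lemma supnorm_diff_commute: "supnorm n (\<lambda>x. g x - g' x) = supnorm n (\<lambda>x. g' x - g x)"
  by (simp add: supnorm_def abs_minus_commute)


text \<open>A sequence of length N with letter counts within CARD(X) of N p(t): every letter except
  a designated one gets the floor of N p(t) copies, the designated letter takes the rest.\<close>

definition floor_count :: "('a \<Rightarrow> real) \<Rightarrow> nat \<Rightarrow> 'a \<Rightarrow> nat" where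
  "floor_count p N t = nat \<lfloor>real N * p t\<rfloor>"

definition round_count :: "('a::finite \<Rightarrow> real) \<Rightarrow> nat \<Rightarrow> 'a \<Rightarrow> nat" where
  "round_count p N t =
     (if t = undefined then N - (\<Sum>u\<in>- {undefined}. floor_count p N u) else floor_count p N t)"

definition round_seq :: "('a::{finite,linorder} \<Rightarrow> real) \<Rightarrow> nat \<Rightarrow> 'a list" where
  "round_seq p N = sorted_list_of_multiset (\<Sum>t\<in>UNIV. replicate_mset (round_count p N t) t)"

lemma count_round_seq: "count_list (round_seq p N) t = round_count p N t"
  by (simp add: round_seq_def count_mset[symmetric] count_sum)

lemma floor_count_bounds:
  assumes "0 \<le> p t"
  shows "real N * p t - 1 < real (floor_count p N t)" "real (floor_count p N t) \<le> real N * p t"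
proof -
  have "real (floor_count p N t) = of_int \<lfloor>real N * p t\<rfloor>"
    using assms by (simp add: floor_count_def)
  then show "real N * p t - 1 < real (floor_count p N t)" "real (floor_count p N t) \<le> real N * p t"
    by simp_all
qed

lemma floor_count_sum:
  fixes p :: "'a::finite \<Rightarrow> real"
  assumes "is_prob p"
  shows "(\<Sum>u\<in>- {undefined}. floor_count p N u) \<le> N"
    and "\<bar>real N - real (\<Sum>u\<in>- {undefined}. floor_count p N u) - real N * p undefined\<bar>
           \<le> real CARD('a)"
proof -
  let ?R = "- {undefined :: 'a}"
  have p0: "\<And>t. 0 \<le> p t" using assms by (simp add: is_prob_def)
  have "(\<Sum>t\<in>UNIV. p t) = p undefined + (\<Sum>u\<in>?R. p u)"
    by (subst sum.remove[of UNIV undefined]) (auto simp: Compl_eq_Diff_UNIV)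
  then have "(\<Sum>u\<in>?R. p u) = 1 - p undefined"
    using assms by (simp add: is_prob_def)
  then have pR: "(\<Sum>u\<in>?R. real N * p u) = real N - real N * p undefined"
    by (simp add: sum_distrib_left[symmetric] right_diff_distrib)
  have upper: "real (\<Sum>u\<in>?R. floor_count p N u) \<le> (\<Sum>u\<in>?R. real N * p u)"
    unfolding of_nat_sum by (intro sum_mono floor_count_bounds p0)
  have "(\<Sum>u\<in>?R. real N * p u - 1) \<le> (\<Sum>u\<in>?R. real (floor_count p N u))"
    by (intro sum_mono less_imp_le floor_count_bounds p0)
  then have lower: "(\<Sum>u\<in>?R. real N * p u) - real (card ?R) \<le> real (\<Sum>u\<in>?R. floor_count p N u)"
    by (simp add: sum_subtractf)
  have "card ?R \<le> CARD('a)" by (rule card_mono) simp_all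
  then have "real (card ?R) \<le> real CARD('a)" by (simp only: of_nat_le_iff)
  with upper lower pR
  show "\<bar>real N - real (\<Sum>u\<in>?R. floor_count p N u) - real N * p undefined\<bar> \<le> real CARD('a)"
    by linarith
  have "0 \<le> real N * p undefined" using p0 by simp
  with upper pR have "real (\<Sum>u\<in>?R. floor_count p N u) \<le> real N" by linarith
  then show "(\<Sum>u\<in>?R. floor_count p N u) \<le> N" by (simp only: of_nat_le_iff)
qed

lemma round_count_error:
  fixes p :: "'a::finite \<Rightarrow> real"
  assumes "is_prob p"
  shows "\<bar>real (round_count p N t) - real N * p t\<bar> \<le> real CARD('a)"
proof (cases "t = undefined")
  case True
  then show ?thesis
    using floor_count_sum[OF assms, of N] by (simp add: round_count_def of_nat_diff)
next
  case False
  have "0 \<le> p t" using assms by (simp add: is_prob_def)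
  then have "\<bar>real (round_count p N t) - real N * p t\<bar> \<le> 1"
    using False floor_count_bounds[of p t N] by (simp add: round_count_def)
  also have "1 \<le> real CARD('a)" by simp
  finally show ?thesis .
qed

lemma length_round_seq:
  assumes "is_prob p"
  shows "length (round_seq p N) = N"
proof -
  have "length (round_seq p N) = size (\<Sum>t\<in>UNIV. replicate_mset (round_count p N t) t)"
    unfolding round_seq_def by (metis mset_sorted_list_of_multiset size_mset)
  also have "\<dots> = (\<Sum>t\<in>UNIV. round_count p N t)" by simp
  also have "\<dots> = round_count p N undefined + (\<Sum>u\<in>- {undefined}. floor_count p N u)"
    by (subst sum.remove[of UNIV undefined])
       (auto simp: Compl_eq_Diff_UNIV round_count_def intro!: sum.cong)
  also have "\<dots> = N"
    using floor_count_sum(1)[OF assms] by (simp add: round_count_def)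
  finally show ?thesis .
qed

lemma round_seq_type:
  assumes "is_prob (p :: 'a::{finite,linorder} \<Rightarrow> real)"
  shows "(\<lambda>N. seq_type (round_seq p N) t) \<longlonglongrightarrow> p t"
proof -
  define d where "d = real CARD('a)"
  have close: "\<bar>seq_type (round_seq p N) t - p t\<bar> \<le> d / real N" if "0 < N" for N
  proof -
    have "seq_type (round_seq p N) t - p t = (real (round_count p N t) - real N * p t) / real N"
      using that by (simp add: seq_type_def count_round_seq length_round_seq[OF assms] field_simps)
    then show ?thesis using round_count_error[OF assms, of N t] that
      by (simp add: d_def abs_divide divide_right_mono)
  qed
  have ev: "\<forall>\<^sub>F N in sequentially. \<bar>seq_type (round_seq p N) t - p t\<bar> \<le> d / real N"
    using eventually_gt_at_top[of 0] by eventually_elim (rule close)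
  have "(\<lambda>N. seq_type (round_seq p N) t - p t) \<longlonglongrightarrow> 0"
  proof (rule tendsto_sandwich[of "\<lambda>N. - (d / real N)" _ _ "\<lambda>N. d / real N"])
    show "\<forall>\<^sub>F N in sequentially. - (d / real N) \<le> seq_type (round_seq p N) t - p t"
      using ev by eventually_elim (simp add: abs_le_iff)
    show "\<forall>\<^sub>F N in sequentially. seq_type (round_seq p N) t - p t \<le> d / real N"
      using ev by eventually_elim (simp add: abs_le_iff)
    show "(\<lambda>N. - (d / real N)) \<longlonglongrightarrow> 0" "(\<lambda>N. d / real N) \<longlonglongrightarrow> 0"
      using tendsto_minus[OF lim_const_over_n[of d]] lim_const_over_n[of d] by simp_all
  qed
  then show ?thesis by (simp add: LIM_zero_iff)
qed

lemma sorted_round_seq: "sorted (round_seq p N)"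
  by (simp add: round_seq_def)

lemma approx_seq_exists:
  assumes "\<forall>p\<in>set ms. is_prob p"
  shows "approx_seq ms (\<lambda>N. map (\<lambda>p. round_seq p N) ms)"
  using assms unfolding approx_seq_def
  by (auto simp: length_round_seq round_seq_type sorted_round_seq)

lemma ln_sum_exp_le_shift:
  fixes u v :: "'i \<Rightarrow> real"
  assumes fin: "finite I" and ne: "I \<noteq> {}" and le: "\<And>k. k \<in> I \<Longrightarrow> u k \<le> v k + c"
  shows "ln (\<Sum>k\<in>I. exp (u k)) \<le> ln (\<Sum>k\<in>I. exp (v k)) + c"
proof -
  have pos: "0 < (\<Sum>k\<in>I. exp (w k))" for w :: "'i \<Rightarrow> real"
    using fin ne by (intro sum_pos) auto
  have "(\<Sum>k\<in>I. exp (u k)) \<le> (\<Sum>k\<in>I. exp c * exp (v k))"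
    using le by (intro sum_mono) (simp add: exp_add[symmetric] add.commute)
  also have "\<dots> = exp c * (\<Sum>k\<in>I. exp (v k))" by (simp add: sum_distrib_left)
  finally have "ln (\<Sum>k\<in>I. exp (u k)) \<le> ln (exp c * (\<Sum>k\<in>I. exp (v k)))"
    using pos by (subst ln_le_cancel_iff) (auto intro: mult_pos_pos)
  also have "\<dots> = c + ln (\<Sum>k\<in>I. exp (v k))" using pos[of v] by (simp add: ln_mult)
  finally show ?thesis by simp
qed

lemma ln_sum_exp_convex:
  fixes u v :: "'i \<Rightarrow> real"
  assumes fin: "finite I" and ne: "I \<noteq> {}" and a: "0 \<le> a" "a \<le> 1"
  shows "ln (\<Sum>k\<in>I. exp (a * u k + (1 - a) * v k))
         \<le> a * ln (\<Sum>k\<in>I. exp (u k)) + (1 - a) * ln (\<Sum>k\<in>I. exp (v k))"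
proof -
  define U where "U = (\<Sum>k\<in>I. exp (u k))"
  define V where "V = (\<Sum>k\<in>I. exp (v k))"
  have U: "U > 0" unfolding U_def using fin ne by (intro sum_pos) auto
  have V: "V > 0" unfolding V_def using fin ne by (intro sum_pos) auto
  define M where "M = a * ln U + (1 - a) * ln V"
  text \<open>After normalising by the partition sums, each term is a convex combination.\<close>
  have convex_term: "exp (a * u k + (1 - a) * v k) \<le> exp M * (a * (exp (u k) / U) + (1 - a) * (exp (v k) / V))"
    for k
  proof -
    have "exp (a * u k + (1 - a) * v k) = exp M * exp (a * (u k - ln U) + (1 - a) * (v k - ln V))"
      unfolding M_def by (simp add: exp_add[symmetric] algebra_simps)
    also have "exp (a * (u k - ln U) + (1 - a) * (v k - ln V))
             \<le> a * exp (u k - ln U) + (1 - a) * exp (v k - ln V)"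
      using convex_onD[OF exp_convex, of "1 - a" "u k - ln U" "v k - ln V"] a
      by (simp add: algebra_simps)
    also have "exp (u k - ln U) = exp (u k) / U" using U by (simp add: exp_diff)
    also have "exp (v k - ln V) = exp (v k) / V" using V by (simp add: exp_diff)
    finally show ?thesis by (simp add: mult_left_mono)
  qed
  have "(\<Sum>k\<in>I. exp (a * u k + (1 - a) * v k))
      \<le> (\<Sum>k\<in>I. exp M * (a * (exp (u k) / U) + (1 - a) * (exp (v k) / V)))"
    by (intro sum_mono convex_term)
  also have "\<dots> = exp M * (a * ((\<Sum>k\<in>I. exp (u k)) / U) + (1 - a) * ((\<Sum>k\<in>I. exp (v k)) / V))"
    by (simp add: sum_distrib_left sum.distrib sum_divide_distrib distrib_left mult.assoc)
  also have "\<dots> = exp M" using U V by (simp add: U_def[symmetric] V_def[symmetric])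
  finally have "ln (\<Sum>k\<in>I. exp (a * u k + (1 - a) * v k)) \<le> ln (exp M)"
    using fin ne by (subst ln_le_cancel_iff) (auto intro!: sum_pos)
  then show ?thesis by (simp add: M_def U_def V_def)
qed

definition partition_fn :: "('a list \<Rightarrow> real) \<Rightarrow> nat \<Rightarrow> (nat \<Rightarrow> 'a list list) \<Rightarrow> nat \<Rightarrow> real" where
  "partition_fn h n \<Xi> N = (\<Sum>ss\<in>perm_tuples n N. exp (N_kappa N h (map2 act ss (\<Xi> N))))"

lemma perm_tuples_lists: "perm_tuples n N = {ss. set ss \<subseteq> {\<sigma>. \<sigma> permutes {..<N}} \<and> length ss = n}"
  by (auto simp: perm_tuples_def)

lemma finite_perm_tuples: "finite (perm_tuples n N)"
  unfolding perm_tuples_lists by (simp add: finite_lists_length_eq finite_permutations)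

lemma card_perm_tuples: "card (perm_tuples n N) = fact N ^ n"
  unfolding perm_tuples_lists by (simp add: card_lists_length_eq finite_permutations card_permutations)

lemma perm_tuples_nonempty: "perm_tuples n N \<noteq> {}"
proof -
  have "replicate n id \<in> perm_tuples n N" by (auto simp: perm_tuples_def permutes_id)
  then show ?thesis by blast
qed

lemma pressure_seq_partition_fn:
  "pressure_seq h n \<Xi> N = (ln (partition_fn h n \<Xi> N) - ln (fact N ^ n)) / real N"
proof -
  have "0 < partition_fn h n \<Xi> N"
    unfolding partition_fn_def using finite_perm_tuples perm_tuples_nonempty by (intro sum_pos) auto
  then have "ln ((1 / fact N ^ n) * partition_fn h n \<Xi> N) = ln (partition_fn h n \<Xi> N) - ln (fact N ^ n)"
    using ln_div[of "partition_fn h n \<Xi> N" "fact N ^ n"] by simp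
  then show ?thesis by (simp add: pressure_seq_def partition_fn_def)
qed

lemma count_list_as_sum: "real (count_list xs t) = (\<Sum>j<length xs. if xs ! j = t then 1 else 0)"
  by (induction xs) (simp_all add: sum.lessThan_Suc_shift del: sum.lessThan_Suc)

lemma pressure_seq_compare:
  assumes N: "0 < N"
    and le: "\<And>ss. ss \<in> perm_tuples n N \<Longrightarrow>
               N_kappa N g (map2 act ss (\<Xi> N)) \<le> N_kappa N g' (map2 act ss (\<Xi> N)) + real N * c"
  shows "pressure_seq g n \<Xi> N \<le> pressure_seq g' n \<Xi> N + c"
proof -
  have "ln (partition_fn g n \<Xi> N) \<le> ln (partition_fn g' n \<Xi> N) + real N * c"
    unfolding partition_fn_def
    by (rule ln_sum_exp_le_shift[OF finite_perm_tuples perm_tuples_nonempty le])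
  then show ?thesis using N by (simp add: pressure_seq_partition_fn field_simps)
qed

lemma pressure_seq_shift:
  assumes N: "0 < N"
    and eq: "\<And>ss. ss \<in> perm_tuples n N \<Longrightarrow>
               N_kappa N g (map2 act ss (\<Xi> N)) = N_kappa N g' (map2 act ss (\<Xi> N)) + real N * c"
  shows "pressure_seq g n \<Xi> N = pressure_seq g' n \<Xi> N + c"
proof -
  have "pressure_seq g n \<Xi> N \<le> pressure_seq g' n \<Xi> N + c"
    using eq by (intro pressure_seq_compare[OF N]) simp
  moreover have "pressure_seq g' n \<Xi> N \<le> pressure_seq g n \<Xi> N + (- c)"
    using eq by (intro pressure_seq_compare[OF N]) simp
  ultimately show ?thesis by simp
qed

lemma pressure_seq_add_const:
  "0 < N \<Longrightarrow> pressure_seq (\<lambda>x. g x + c) n \<Xi> N = pressure_seq g n \<Xi> N + c"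
  by (rule pressure_seq_shift) (simp_all add: N_kappa_def sum.distrib)

lemma pressure_seq_zero: "pressure_seq (\<lambda>x. 0) n \<Xi> N = 0"
  by (simp add: pressure_seq_def N_kappa_def card_perm_tuples)

lemma pressure_seq_convex:
  assumes a: "0 \<le> a" "a \<le> 1"
  shows "pressure_seq (\<lambda>x. a * g x + (1 - a) * g' x) n \<Xi> N
       \<le> a * pressure_seq g n \<Xi> N + (1 - a) * pressure_seq g' n \<Xi> N"
proof -
  let ?K = "ln (fact N ^ n) :: real"
  have lin: "N_kappa N (\<lambda>x. a * g x + (1 - a) * g' x) Y = a * N_kappa N g Y + (1 - a) * N_kappa N g' Y"
    for Y by (simp add: N_kappa_def sum.distrib sum_distrib_left)
  have "ln (partition_fn (\<lambda>x. a * g x + (1 - a) * g' x) n \<Xi> N)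
      \<le> a * ln (partition_fn g n \<Xi> N) + (1 - a) * ln (partition_fn g' n \<Xi> N)"
    unfolding partition_fn_def lin
    by (rule ln_sum_exp_convex[OF finite_perm_tuples perm_tuples_nonempty a])
  then have "(ln (partition_fn (\<lambda>x. a * g x + (1 - a) * g' x) n \<Xi> N) - ?K) / real N
      \<le> (a * (ln (partition_fn g n \<Xi> N) - ?K) + (1 - a) * (ln (partition_fn g' n \<Xi> N) - ?K)) / real N"
    by (intro divide_right_mono) (simp_all add: algebra_simps)
  then show ?thesis by (simp add: pressure_seq_partition_fn add_divide_distrib)
qed

context
  fixes ms :: "('a::{finite,linorder} \<Rightarrow> real) list" and \<Xi> :: "nat \<Rightarrow> 'a list list"
  assumes approx: "approx_seq ms \<Xi>"
begin

lemma configuration_column: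
  assumes "ss \<in> perm_tuples (length ms) N"
  shows "map (\<lambda>x. x ! j) (map2 act ss (\<Xi> N)) \<in> pts (length ms)"
  using assms approx by (simp add: pts_def perm_tuples_def approx_seq_def)

lemma pressure_seq_lipschitz:
  "pressure_seq g (length ms) \<Xi> N \<le> pressure_seq g' (length ms) \<Xi> N + supnorm (length ms) (\<lambda>x. g x - g' x)"
proof (cases "N = 0")
  case True
  then show ?thesis using supnorm_nonneg by (simp add: pressure_seq_def)
next
  case False
  show ?thesis
  proof (rule pressure_seq_compare)
    fix ss assume ss: "ss \<in> perm_tuples (length ms) N"
    let ?col = "\<lambda>j. map (\<lambda>x. x ! j) (map2 act ss (\<Xi> N))"
    have "N_kappa N g (map2 act ss (\<Xi> N)) - N_kappa N g' (map2 act ss (\<Xi> N))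
        = (\<Sum>j<N. g (?col j) - g' (?col j))"
      by (simp add: N_kappa_def sum_subtractf)
    also have "\<dots> \<le> (\<Sum>j<N. supnorm (length ms) (\<lambda>x. g x - g' x))"
      using abs_le_supnorm[OF configuration_column[OF ss], where f = "\<lambda>x. g x - g' x"]
      by (intro sum_mono) (meson abs_le_D1)
    finally show "N_kappa N g (map2 act ss (\<Xi> N))
        \<le> N_kappa N g' (map2 act ss (\<Xi> N)) + real N * supnorm (length ms) (\<lambda>x. g x - g' x)"
      by simp
  qed (use False in simp)
qed

lemma pressure_seq_mono:
  assumes "\<And>x. x \<in> pts (length ms) \<Longrightarrow> g x \<le> g' x"
  shows "pressure_seq g (length ms) \<Xi> N \<le> pressure_seq g' (length ms) \<Xi> N"
proof (cases "N = 0")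
  case True
  then show ?thesis by (simp add: pressure_seq_def)
next
  case False
  have "pressure_seq g (length ms) \<Xi> N \<le> pressure_seq g' (length ms) \<Xi> N + 0"
  proof (rule pressure_seq_compare)
    fix ss assume "ss \<in> perm_tuples (length ms) N"
    then show "N_kappa N g (map2 act ss (\<Xi> N)) \<le> N_kappa N g' (map2 act ss (\<Xi> N)) + real N * 0"
      unfolding N_kappa_def using assms configuration_column by (simp add: sum_mono)
  qed (use False in simp)
  then show ?thesis by simp
qed

text \<open>Permuting the i-th row does not change how often the letter t occurs in it; hence adding
  a function of the i-th coordinate shifts the pressure by its average under the i-th type.\<close>
lemma pressure_seq_add_marginal:
  assumes N: "0 < N" and i: "i < length ms"
  shows "pressure_seq (\<lambda>x. g x + s * (if x ! i = t then 1 else 0)) (length ms) \<Xi> N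
       = pressure_seq g (length ms) \<Xi> N + s * seq_type (\<Xi> N ! i) t"
proof (rule pressure_seq_shift[OF N])
  fix ss assume ss: "ss \<in> perm_tuples (length ms) N"
  have len: "length (\<Xi> N) = length ms" "length (\<Xi> N ! i) = N"
    using approx i by (auto simp: approx_seq_def)
  have perm: "inv (ss ! i) permutes {..<length (\<Xi> N ! i)}"
    using ss i len by (auto simp: perm_tuples_def intro!: permutes_inv)
  let ?row = "act (ss ! i) (\<Xi> N ! i)"
  have row: "map2 act ss (\<Xi> N) ! i = ?row" "length ?row = N"
    using ss i len by (simp_all add: perm_tuples_def act_def)
  have "(\<Sum>j<N. (if map (\<lambda>x. x ! j) (map2 act ss (\<Xi> N)) ! i = t then 1 else 0 :: real))
      = (\<Sum>j<length ?row. if ?row ! j = t then 1 else 0)"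
    using ss i len row by (simp add: perm_tuples_def)
  also have "\<dots> = real (count_list ?row t)"
    by (rule count_list_as_sum[symmetric])
  also have "\<dots> = real (count_list (\<Xi> N ! i) t)"
    using perm by (simp add: act_def count_mset[symmetric] mset_permute_list)
  also have "\<dots> = real N * seq_type (\<Xi> N ! i) t"
    using N len by (simp add: seq_type_def)
  finally show "N_kappa N (\<lambda>x. g x + s * (if x ! i = t then 1 else 0)) (map2 act ss (\<Xi> N))
      = N_kappa N g (map2 act ss (\<Xi> N)) + real N * (s * seq_type (\<Xi> N ! i) t)"
    by (simp add: N_kappa_def sum.distrib sum_distrib_left[symmetric] mult_ac)
qed

end

lemma limsup_le_shift:
  assumes "\<And>N. 0 < N \<Longrightarrow> a N \<le> b N + c"
  shows "limsup (\<lambda>N. ereal (a N)) \<le> limsup (\<lambda>N. ereal (b N)) + ereal c"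
proof -
  have "limsup (\<lambda>N. ereal (a N)) \<le> limsup (\<lambda>N. ereal (b N) + ereal c)"
    using assms by (intro Limsup_mono eventually_sequentiallyI[of 1]) simp
  also have "\<dots> = limsup (\<lambda>N. ereal (b N)) + ereal c"
    by (rule Limsup_add_ereal_right) auto
  finally show ?thesis .
qed

lemma limsup_add_convergent:
  assumes "\<And>N. 0 < N \<Longrightarrow> a N = b N + c N" and "c \<longlonglongrightarrow> l"
  shows "limsup (\<lambda>N. ereal (a N)) = limsup (\<lambda>N. ereal (b N)) + ereal l"
proof -
  have "limsup (\<lambda>N. ereal (a N)) = limsup (\<lambda>N. ereal (c N) + ereal (b N))"
    using assms(1) by (intro Limsup_eq eventually_sequentiallyI[of 1]) simp
  also have "\<dots> = ereal l + limsup (\<lambda>N. ereal (b N))"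
    using assms(2) by (intro ereal_limsup_lim_add) (simp_all add: tendsto_ereal)
  finally show ?thesis by (simp add: add.commute)
qed

definition chosen_approx :: "('a::{finite,linorder} \<Rightarrow> real) list \<Rightarrow> nat \<Rightarrow> 'a list list" where
  "chosen_approx ms = (SOME \<Xi>. approx_seq ms \<Xi>)"

definition pressure :: "('a::{finite,linorder} list \<Rightarrow> real) \<Rightarrow> ('a \<Rightarrow> real) list \<Rightarrow> real" where
  "pressure h ms = real_of_ereal (P_sym h ms)"

context
  fixes ms :: "('a::{finite,linorder} \<Rightarrow> real) list"
  assumes probs: "\<forall>p\<in>set ms. is_prob p"
begin

lemma approx_chosen: "approx_seq ms (chosen_approx ms)"
  unfolding chosen_approx_def by (rule someI[where P = "approx_seq ms", OF approx_seq_exists[OF probs]])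

lemma P_sym_chosen: "P_sym h ms = limsup (\<lambda>N. ereal (pressure_seq h (length ms) (chosen_approx ms) N))"
  by (simp add: P_sym_def chosen_approx_def)

text \<open>The finite-volume pressures are bounded by the sup norm, so the mutual pressure is finite.\<close>
lemma P_sym_pressure: "P_sym h ms = ereal (pressure h ms)"
proof -
  let ?n = "length ms" and ?p = "\<lambda>N. pressure_seq h (length ms) (chosen_approx ms) N"
  have upper: "?p N \<le> supnorm ?n h" for N
    using pressure_seq_lipschitz[OF approx_chosen, where g = h and g' = "\<lambda>x. 0" and N = N] by (simp add: pressure_seq_zero)
  have "supnorm ?n (\<lambda>x. 0 - h x) = supnorm ?n h" by (simp add: supnorm_def)
  then have lower: "- supnorm ?n h \<le> ?p N" for N
    using pressure_seq_lipschitz[OF approx_chosen, where g = "\<lambda>x. 0" and g' = h and N = N] by (simp add: pressure_seq_zero)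
  have "P_sym h ms \<le> ereal (supnorm ?n h)" unfolding P_sym_chosen
    by (rule Limsup_bounded) (use upper in simp)
  moreover have "ereal (- supnorm ?n h) \<le> P_sym h ms" unfolding P_sym_chosen
    by (rule le_Limsup) (use lower in simp_all)
  ultimately have "\<bar>P_sym h ms\<bar> \<noteq> \<infinity>" by auto
  then show ?thesis unfolding pressure_def by (simp add: ereal_real')
qed

lemma pressure_lipschitz: "pressure g ms \<le> pressure g' ms + supnorm (length ms) (\<lambda>x. g x - g' x)"
proof -
  have "ereal (pressure g ms) \<le> ereal (pressure g' ms) + ereal (supnorm (length ms) (\<lambda>x. g x - g' x))"
    unfolding P_sym_pressure[symmetric] P_sym_chosen
    by (rule limsup_le_shift) (rule pressure_seq_lipschitz[OF approx_chosen])
  then show ?thesis by simp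
qed

lemma pressure_mono:
  assumes "\<And>x. x \<in> pts (length ms) \<Longrightarrow> g x \<le> g' x"
  shows "pressure g ms \<le> pressure g' ms"
proof -
  have "ereal (pressure g ms) \<le> ereal (pressure g' ms) + ereal 0"
    unfolding P_sym_pressure[symmetric] P_sym_chosen
    by (rule limsup_le_shift) (simp add: pressure_seq_mono[OF approx_chosen assms])
  then show ?thesis by simp
qed

lemma pressure_local: "\<forall>x\<in>pts (length ms). g x = g' x \<Longrightarrow> pressure g ms = pressure g' ms"
  using pressure_mono[of g g'] pressure_mono[of g' g] by (simp add: order_antisym)

lemma pressure_add_const: "pressure (\<lambda>x. g x + c) ms = pressure g ms + c"
proof -
  have "P_sym (\<lambda>x. g x + c) ms = P_sym g ms + ereal c"
    unfolding P_sym_chosen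
    by (rule limsup_add_convergent[where c = "\<lambda>N. c"]) (simp_all add: pressure_seq_add_const)
  then show ?thesis by (simp add: P_sym_pressure)
qed

lemma pressure_add_marginal:
  assumes i: "i < length ms"
  shows "pressure (\<lambda>x. g x + s * (if x ! i = t then 1 else 0)) ms = pressure g ms + s * (ms ! i) t"
proof -
  have "(\<lambda>N. s * seq_type (chosen_approx ms N ! i) t) \<longlonglongrightarrow> s * (ms ! i) t"
    using approx_chosen i unfolding approx_seq_def by (intro tendsto_mult_left) simp
  then have "P_sym (\<lambda>x. g x + s * (if x ! i = t then 1 else 0)) ms = P_sym g ms + ereal (s * (ms ! i) t)"
    unfolding P_sym_chosen
    by (rule limsup_add_convergent[rotated]) (rule pressure_seq_add_marginal[OF approx_chosen _ i])
  then show ?thesis by (simp add: P_sym_pressure)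
qed

lemma pressure_convex:
  assumes a: "0 \<le> a" "a \<le> 1"
  shows "pressure (\<lambda>x. a * g x + (1 - a) * g' x) ms \<le> a * pressure g ms + (1 - a) * pressure g' ms"
proof -
  let ?p = "\<lambda>h N. pressure_seq h (length ms) (chosen_approx ms) N"
  have "P_sym (\<lambda>x. a * g x + (1 - a) * g' x) ms
      \<le> limsup (\<lambda>N. ereal a * ereal (?p g N) + ereal (1 - a) * ereal (?p g' N))"
    unfolding P_sym_chosen by (rule Limsup_mono) (simp add: pressure_seq_convex[OF a])
  also have "\<dots> \<le> limsup (\<lambda>N. ereal a * ereal (?p g N)) + limsup (\<lambda>N. ereal (1 - a) * ereal (?p g' N))"
    by (rule ereal_limsup_add_mono)
  also have "\<dots> = ereal a * P_sym g ms + ereal (1 - a) * P_sym g' ms"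
    unfolding P_sym_chosen using a limsup_ereal_mult_left[of a] limsup_ereal_mult_left[of "1 - a"]
    by (simp del: times_ereal.simps add: times_ereal.simps[symmetric])
  finally show ?thesis by (simp add: P_sym_pressure)
qed

end

context
  fixes ms :: "('a::{finite,linorder} \<Rightarrow> real) list"
  assumes probs: "\<forall>p\<in>set ms. is_prob p"
begin

text \<open>The pressure has a subgradient at every h: it is convex, local, and bounded below along
  rays by the Lipschitz estimate.\<close>

lemma pressure_subgradient_exists: "\<exists>c. is_subgradient (pts (length ms)) (\<lambda>g. pressure g ms) h c"
proof (rule subgradient_exists)
  show "\<exists>C. \<forall>t>0. pressure h ms - pressure (\<lambda>x. h x + t * g x) ms \<le> t * C" for g
  proof (intro exI allI impI)
    fix t :: real assume t: "0 < t"
    have "supnorm (length ms) (\<lambda>x. h x - (h x + t * g x)) \<le> t * supnorm (length ms) g"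
      using abs_le_supnorm[of _ "length ms" g] t by (intro supnorm_le) (simp add: abs_mult)
    then show "pressure h ms - pressure (\<lambda>x. h x + t * g x) ms \<le> t * supnorm (length ms) g"
      using pressure_lipschitz[OF probs, of h "\<lambda>x. h x + t * g x"] by linarith
  qed
  show "convex_functional (\<lambda>g. pressure g ms)"
    unfolding convex_functional_def using pressure_convex[OF probs] by blast
qed (simp_all add: finite_pts pressure_local[OF probs])

text \<open>Every subgradient of the pressure is a probability measure with the prescribed marginals:
  nonnegativity from monotonicity, total mass and marginals from the two shift identities.\<close>

lemma subgradient_prob_marg:
  assumes sg: "is_subgradient (pts (length ms)) (\<lambda>g. pressure g ms) h c"
  shows "c \<in> prob_marg ms"
proof -
  let ?n = "length ms"
  have nonneg: "0 \<le> c x" if "x \<in> pts ?n" for x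
    using sg finite_pts that pressure_mono[OF probs] by (rule subgradient_nonneg)
  have "(\<Sum>x\<in>pts ?n. c x * 1) = 1"
    using sg by (rule subgradient_affine_direction) (simp add: pressure_add_const[OF probs])
  then have total: "(\<Sum>x\<in>pts ?n. c x) = 1" by simp
  have marginal: "marginal ?n c i t = (ms ! i) t" if i: "i < ?n" for i t
  proof -
    have "marginal ?n c i t = (\<Sum>x\<in>pts ?n. c x * (if x ! i = t then 1 else 0))"
      unfolding marginal_def by (simp add: sum.inter_filter[symmetric] finite_pts if_distrib cong: if_cong)
    also have "\<dots> = (ms ! i) t"
      using sg by (rule subgradient_affine_direction) (simp add: pressure_add_marginal[OF probs i])
    finally show ?thesis .
  qed
  show ?thesis
    unfolding prob_marg_def is_prob_n_def
    using nonneg total marginal by (auto intro!: nth_equalityI simp: marginals_def)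
qed

lemma I_sym_subgradient:
  assumes sg: "is_subgradient (pts (length ms)) (\<lambda>g. pressure g ms) h c"
    and marg: "marginals (length ms) c = ms"
  shows "I_sym (length ms) c = ereal (integ (length ms) c h - pressure h ms)"
proof -
  have integ: "integ (length ms) c g = (\<Sum>x\<in>pts (length ms). c x * g x)" for g
    by (simp add: integ_def mult.commute)
  show ?thesis
    unfolding I_sym_def marg
  proof (rule antisym)
    show "(SUP g. ereal (integ (length ms) c g) - P_sym g ms) \<le> ereal (integ (length ms) c h - pressure h ms)"
      using subgradient_maximizes[OF sg] by (intro SUP_least) (simp add: P_sym_pressure[OF probs] integ)
    show "ereal (integ (length ms) c h - pressure h ms) \<le> (SUP g. ereal (integ (length ms) c g) - P_sym g ms)"
      by (rule SUP_upper2[of h]) (simp_all add: P_sym_pressure[OF probs])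
  qed
qed

lemma variational_max_attained:
  "\<exists>\<mu>\<in>prob_marg ms. P_sym h ms = ereal (integ (length ms) \<mu> h) - I_sym (length ms) \<mu>"
proof -
  obtain c where sg: "is_subgradient (pts (length ms)) (\<lambda>g. pressure g ms) h c"
    using pressure_subgradient_exists by blast
  then have c: "c \<in> prob_marg ms" by (rule subgradient_prob_marg)
  then have "I_sym (length ms) c = ereal (integ (length ms) c h - pressure h ms)"
    using sg by (intro I_sym_subgradient) (simp_all add: prob_marg_def)
  then show ?thesis using c by (intro bexI[of _ c]) (simp_all add: P_sym_pressure[OF probs])
qed

lemma fenchel_young:
  assumes "\<mu> \<in> prob_marg ms"
  shows "ereal (integ (length ms) \<mu> h) - I_sym (length ms) \<mu> \<le> P_sym h ms"
proof -
  let ?a = "ereal (integ (length ms) \<mu> h)"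
  have "?a - P_sym h ms \<le> I_sym (length ms) \<mu>"
    using assms unfolding I_sym_def prob_marg_def by (intro SUP_upper2[of h]) simp_all
  then have "?a - I_sym (length ms) \<mu> \<le> ?a - (?a - P_sym h ms)"
    by (intro ereal_minus_mono) simp_all
  also have "\<dots> = P_sym h ms" by (simp add: P_sym_pressure[OF probs])
  finally show ?thesis .
qed

lemma P_sym_lipschitz: "\<bar>P_sym h ms - P_sym h' ms\<bar> \<le> ereal (supnorm (length ms) (\<lambda>x. h x - h' x))"
proof -
  have "\<bar>pressure h ms - pressure h' ms\<bar> \<le> supnorm (length ms) (\<lambda>x. h x - h' x)"
    using pressure_lipschitz[OF probs, of h h'] pressure_lipschitz[OF probs, of h' h]
      supnorm_diff_commute[of "length ms" h h']
    unfolding abs_le_iff by linarith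
  then show ?thesis by (simp add: P_sym_pressure[OF probs])
qed

end

theorem mainTheorem15:
  fixes ms :: "('a::{finite,linorder} \<Rightarrow> real) list"
  assumes "\<forall>p\<in>set ms. is_prob p"
  shows "(\<forall>h :: 'a list \<Rightarrow> real.
            (\<exists>\<mu>\<in>prob_marg ms.
               P_sym h ms = ereal (integ (length ms) \<mu> h) - I_sym (length ms) \<mu>) \<and>
            (\<forall>\<mu>\<in>prob_marg ms.
               ereal (integ (length ms) \<mu> h) - I_sym (length ms) \<mu> \<le> P_sym h ms))
       \<and> (\<forall>h h' :: 'a list \<Rightarrow> real.
            \<bar>P_sym h ms - P_sym h' ms\<bar> \<le> ereal (supnorm (length ms) (\<lambda>x. h x - h' x)))"
  using variational_max_attained[OF assms] fenchel_young[OF assms] P_sym_lipschitz[OF assms]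
  by blast

end
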